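(* Let $\Omega\subset\{1,\dots,N\}$ have cardinality $n$, let $0<\epsilon<1$, and let $b\in\mathbb{R}^N$ and $c\in\mathbb{R}^{2N-1}$ be random vectors with independent Bernoulli $\pm1$ entries. Let $\mu$ be the coherence of the random partial circulant matrix $\frac{1}{\sqrt n}S^b_\Omega\in\mathbb{R}^{n\times N}$, or of the random partial Toeplitz matrix $\frac1{\sqrt n}T^c_\Omega\in\mathbb{R}^{n\times N}$. Then with probability at least $1-\epsilon$, $$\mu\le 4\,\frac{\log(2N^2/\epsilon)}{\sqrt n}.$$
   Context: For $b=(b_0,\dots,b_{N-1})\in\mathbb{R}^N$ the circulant matrix $S^b\in\mathbb{R}^{N\times N}$ has entries $S^b_{i,j}=b_{(j-i)\bmod N}$, $i,j=1,\dots,N$. For $c=(c_{-N+1},\dots,c_{N-1})\in\mathbb{R}^{2N-1}$ the Toeplitz matrix $T^c\in\mathbb{R}^{N\times N}$ has entries $T^c_{i,j}=c_{j-i}$. $S^b_\Omega$ (resp. $T^c_\Omega$) is the submatrix consisting of the rows indexed by $\Omega$. A Bernoulli $\pm1$ variable takes values $\pm1$ with probability $1/2$ each. The coherence of a matrix $A$ with columns $a_1,\dots,a_N$ is $\mu=\max_{\rho\neq\lambda}|\langle a_\rho,a_\lambda\rangle|$. *)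

theory Defs
  imports "HOL-Probability.Probability"
begin

definition rademacher_pmf :: "real pmf" where
  "rademacher_pmf = map_pmf (\<lambda>x. if x then 1 else -1) (bernoulli_pmf (1/2))"

definition circulant :: "nat \<Rightarrow> (nat \<Rightarrow> real) \<Rightarrow> nat \<Rightarrow> nat \<Rightarrow> real" where
  "circulant N b i j = b (nat ((int j - int i) mod int N))"

definition toeplitz :: "(int \<Rightarrow> real) \<Rightarrow> nat \<Rightarrow> nat \<Rightarrow> real" where
  "toeplitz c i j = c (int j - int i)"

text \<open>Coherence of the matrix with rows indexed by R and columns indexed by 1..N:
  max over distinct column pairs of |<a_rho, a_lambda>| (0 if there are fewer than 2 columns).\<close>
definition coherence :: "nat set \<Rightarrow> nat \<Rightarrow> (nat \<Rightarrow> nat \<Rightarrow> real) \<Rightarrow> real" where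
  "coherence R N A = Max ({0} \<union> {\<bar>\<Sum>i\<in>R. A i r * A i l\<bar> | r l.
       r \<in> {1..N} \<and> l \<in> {1..N} \<and> r \<noteq> l})"

end

theory Submission
  imports Defs
begin

(* For distinct columns r and l, the inner product of the corresponding columns of the partial
   circulant or Toeplitz matrix is a sum of products x k * x (\<sigma> k) of Rademacher signs over at
   most n indices k, where \<sigma> is a shift without fixed points.  Replacing each x (\<sigma> k) by
   x k * x (\<sigma> k) is a bijection of the sign vectors, since \<sigma> strictly increases a potential and
   the original signs can be recovered along it; so the sum is distributed like a sum of
   independent signs and Hoeffding's inequality bounds its tail.  A cyclic shift only has such a
   potential after splitting the indices into those that wrap around and those that do not.
   A union bound over the at most N^2 column pairs at level 4 ln(2N^2/\<epsilon>) sqrt n concludes. *)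

lemma rademacher_pmf_conv_pmf_of_set: "rademacher_pmf = pmf_of_set {-1, 1}"
proof -
  have "rademacher_pmf = pmf_of_set ((\<lambda>x. if x then 1 else -1::real) ` UNIV)"
    unfolding rademacher_pmf_def bernoulli_pmf_half_conv_pmf_of_set
    by (rule map_pmf_of_set_inj) (auto simp: inj_on_def)
  also have "(\<lambda>x. if x then 1 else -1::real) ` UNIV = {-1, 1}"
    by (auto simp: image_iff)
  finally show ?thesis .
qed

lemma set_pmf_rademacher: "set_pmf rademacher_pmf = {-1, 1}"
  by (simp add: rademacher_pmf_conv_pmf_of_set)

lemma Pi_rademacher_conv_pmf_of_set:
  "finite I \<Longrightarrow> Pi_pmf I 0 (\<lambda>_. rademacher_pmf) = pmf_of_set (PiE_dflt I 0 (\<lambda>_. {-1, 1}))"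
  by (simp add: rademacher_pmf_conv_pmf_of_set Pi_pmf_of_set)

definition shift_product :: "'a set \<Rightarrow> ('a \<Rightarrow> 'a) \<Rightarrow> ('a \<Rightarrow> real) \<Rightarrow> 'a \<Rightarrow> real" where
  "shift_product K \<sigma> x j = (if j \<in> \<sigma> ` K then x (inv_into K \<sigma> j) * x j else x j)"

lemma shift_product_mem_PiE_dflt:
  assumes K: "K \<subseteq> I" and \<sigma>K: "\<sigma> ` K \<subseteq> I" and x: "x \<in> PiE_dflt I 0 (\<lambda>_. {-1, 1})"
  shows "shift_product K \<sigma> x \<in> PiE_dflt I 0 (\<lambda>_. {-1, 1})"
  unfolding PiE_dflt_def
proof (intro CollectI allI conjI impI)
  fix j assume j: "j \<in> I"
  have "x j \<in> {-1, 1}" using x j by (simp add: PiE_dflt_def)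
  moreover have "x (inv_into K \<sigma> j) \<in> {-1, 1}" if "j \<in> \<sigma> ` K"
    using x K inv_into_into[OF that] by (auto simp: PiE_dflt_def)
  ultimately show "shift_product K \<sigma> x j \<in> {-1, 1}"
    by (auto simp: shift_product_def)
next
  fix j assume "j \<notin> I"
  then show "shift_product K \<sigma> x j = 0"
    using x \<sigma>K by (auto simp: PiE_dflt_def shift_product_def)
qed

lemma inj_on_shift_product:
  fixes m :: "'a \<Rightarrow> nat"
  assumes inj: "inj_on \<sigma> K" and K: "K \<subseteq> I"
    and potential: "\<And>k. k \<in> K \<Longrightarrow> m k < m (\<sigma> k)"
  shows "inj_on (shift_product K \<sigma>) (PiE_dflt I 0 (\<lambda>_. {-1, 1}))"
proof
  fix x y
  assume x: "x \<in> PiE_dflt I 0 (\<lambda>_. {-1, 1})" and "y \<in> PiE_dflt I 0 (\<lambda>_. {-1, 1})"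
    and eq: "shift_product K \<sigma> x = shift_product K \<sigma> y"
  have "x j = y j" for j
  proof (induction "m j" arbitrary: j rule: less_induct)
    case less
    show ?case
    proof (cases "j \<in> \<sigma> ` K")
      case True
      then obtain k where k: "k \<in> K" and j: "j = \<sigma> k" by blast
      have "m k < m j" using potential[OF k] j by simp
      then have "x k = y k" by (rule less)
      moreover have "x k \<noteq> 0" using x k K by (auto simp: PiE_dflt_def)
      moreover have "x k * x j = y k * y j"
        using fun_cong[OF eq, of j] True inv_into_f_f[OF inj k] j by (simp add: shift_product_def)
      ultimately show ?thesis by simp
    next
      case False
      then show ?thesis using fun_cong[OF eq, of j] by (simp add: shift_product_def)
    qed
  qed
  then show "x = y" by blast
qed

lemma map_pmf_shift_product_Pi_rademacher:
  fixes m :: "'a \<Rightarrow> nat"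
  assumes "finite I" "K \<subseteq> I" "\<sigma> ` K \<subseteq> I" "inj_on \<sigma> K"
    and "\<And>k. k \<in> K \<Longrightarrow> m k < m (\<sigma> k)"
  shows "map_pmf (shift_product K \<sigma>) (Pi_pmf I 0 (\<lambda>_. rademacher_pmf)) = Pi_pmf I 0 (\<lambda>_. rademacher_pmf)"
proof -
  let ?S = "PiE_dflt I 0 (\<lambda>_. {-1, 1::real})"
  have "finite ?S" using assms(1) by (rule finite_PiE_dflt) auto
  moreover have "shift_product K \<sigma> ` ?S \<subseteq> ?S"
    using shift_product_mem_PiE_dflt[OF assms(2,3)] by blast
  moreover have inj: "inj_on (shift_product K \<sigma>) ?S"
    using inj_on_shift_product assms(2,4,5) by blast
  ultimately have "shift_product K \<sigma> ` ?S = ?S" by (rule endo_inj_surj)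
  moreover have "?S \<noteq> {}"
    using PiE_dflt_empty_iff[of I 0 "\<lambda>_. {-1, 1::real}"] by auto
  ultimately show ?thesis
    using assms(1) inj \<open>finite ?S\<close> by (simp add: Pi_rademacher_conv_pmf_of_set map_pmf_of_set_inj)
qed

lemma Pi_rademacher_sum_tail:
  assumes fin: "finite I" and GI: "G \<subseteq> I" and G: "G \<noteq> {}" and t: "t \<ge> 0"
  shows "measure_pmf.prob (Pi_pmf I 0 (\<lambda>_. rademacher_pmf)) {x. t \<le> \<bar>\<Sum>j\<in>G. x j\<bar>}
           \<le> 2 * exp (- (t\<^sup>2) / (2 * card G))"
proof -
  define P where "P = Pi_pmf I 0 (\<lambda>_. rademacher_pmf)"
  have finG: "finite G" using fin GI finite_subset by blast
  interpret Hoeffding_ineq "measure_pmf P" G "\<lambda>i f. f i" "\<lambda>_. -1" "\<lambda>_. 1" 0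
  proof unfold_locales
    show "finite G" by (rule finG)
    show "prob_space.indep_vars (measure_pmf P) (\<lambda>_. borel) (\<lambda>i f. f i) G"
      unfolding P_def
      by (intro prob_space.indep_vars_compose2[where Y="\<lambda>_ x. x",
            OF _ prob_space.indep_vars_subset[OF _ indep_vars_Pi_pmf[OF fin] GI]])
         (auto simp: measure_pmf.prob_space_axioms)
  next
    fix i assume i: "i \<in> G"
    have "set_pmf P \<subseteq> {f. f i \<in> {-1, 1}}"
      using i GI fin by (auto simp: P_def set_Pi_pmf PiE_dflt_def set_pmf_rademacher)
    then show "AE x in measure_pmf P. x i \<in> {-1..1}"
      by (intro AE_pmfI) auto
  next
    have "measure_pmf.expectation P (\<lambda>f. f i) = 0" if i: "i \<in> G" for i
    proof -
      have "measure_pmf.expectation P (\<lambda>f. f i)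
          = measure_pmf.expectation (map_pmf (\<lambda>f. f i) P) (\<lambda>x. x)"
        by simp
      also have "map_pmf (\<lambda>f. f i) P = rademacher_pmf"
        using i GI fin by (auto simp: P_def Pi_pmf_component)
      finally show ?thesis by (simp add: rademacher_pmf_def)
    qed
    then show "0 \<equiv> \<Sum>i\<in>G. measure_pmf.expectation P (\<lambda>f. f i)" by simp
  qed
  have "(\<Sum>i\<in>G. (1 - (-1::real))\<^sup>2) > 0" using finG G by (simp add: card_gt_0_iff)
  from Hoeffding_ineq_abs_ge[OF t this]
  have "measure_pmf.prob P {x. t \<le> \<bar>(\<Sum>i\<in>G. x i) - 0\<bar>}
      \<le> 2 * exp (-2 * t\<^sup>2 / (\<Sum>i\<in>G. (1 - (-1::real))\<^sup>2))"
    by simp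
  also have "-2 * t\<^sup>2 / (\<Sum>i\<in>G. (1 - (-1::real))\<^sup>2) = - (t\<^sup>2) / (2 * card G)"
    by simp
  finally show ?thesis by (simp add: P_def)
qed

lemma shift_products_sum_tail:
  fixes m :: "'a \<Rightarrow> nat"
  assumes fin: "finite I" and KI: "K \<subseteq> I" and \<sigma>K: "\<sigma> ` K \<subseteq> I" and inj: "inj_on \<sigma> K"
    and potential: "\<And>k. k \<in> K \<Longrightarrow> m k < m (\<sigma> k)" and K: "K \<noteq> {}" and t: "t \<ge> 0"
  shows "measure_pmf.prob (Pi_pmf I 0 (\<lambda>_. rademacher_pmf)) {x. t \<le> \<bar>\<Sum>k\<in>K. x k * x (\<sigma> k)\<bar>}
           \<le> 2 * exp (- (t\<^sup>2) / (2 * card K))"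
proof -
  let ?P = "Pi_pmf I 0 (\<lambda>_. rademacher_pmf)"
  have "(\<Sum>k\<in>K. x k * x (\<sigma> k)) = (\<Sum>j\<in>\<sigma> ` K. shift_product K \<sigma> x j)" for x
    by (simp add: sum.reindex[OF inj] shift_product_def inv_into_f_f[OF inj])
  then have "{x. t \<le> \<bar>\<Sum>k\<in>K. x k * x (\<sigma> k)\<bar>}
      = shift_product K \<sigma> -` {y. t \<le> \<bar>\<Sum>j\<in>\<sigma> ` K. y j\<bar>}"
    by auto
  then have "measure_pmf.prob ?P {x. t \<le> \<bar>\<Sum>k\<in>K. x k * x (\<sigma> k)\<bar>}
      = measure_pmf.prob (map_pmf (shift_product K \<sigma>) ?P) {y. t \<le> \<bar>\<Sum>j\<in>\<sigma> ` K. y j\<bar>}"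
    by simp
  also have "map_pmf (shift_product K \<sigma>) ?P = ?P"
    by (rule map_pmf_shift_product_Pi_rademacher[of I K \<sigma> m, OF fin KI \<sigma>K inj potential])
  also have "measure_pmf.prob ?P {y. t \<le> \<bar>\<Sum>j\<in>\<sigma> ` K. y j\<bar>}
      \<le> 2 * exp (- (t\<^sup>2) / (2 * card (\<sigma> ` K)))"
    using K by (intro Pi_rademacher_sum_tail[OF fin \<sigma>K _ t]) auto
  finally show ?thesis by (simp add: card_image[OF inj])
qed

lemma shift_products_sum_tail_sqrt:
  fixes m :: "'a \<Rightarrow> nat" and n :: nat and L :: real
  assumes fin: "finite I" and KI: "K \<subseteq> I" and \<sigma>K: "\<sigma> ` K \<subseteq> I" and inj: "inj_on \<sigma> K"
    and potential: "\<And>k. k \<in> K \<Longrightarrow> m k < m (\<sigma> k)"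
    and card: "card K \<le> n" and L: "L \<ge> 1"
  shows "measure_pmf.prob (Pi_pmf I 0 (\<lambda>_. rademacher_pmf))
           {x. \<bar>\<Sum>k\<in>K. x k * x (\<sigma> k)\<bar> > 2 * L * sqrt n} \<le> 2 * exp (- 2 * L)"
proof (cases "K = {}")
  case True
  have "0 \<le> 2 * L * sqrt n" using L by simp
  then show ?thesis using True by (simp add: not_less)
next
  case False
  define t where "t = 2 * L * sqrt n"
  have t: "t \<ge> 0" using L by (simp add: t_def)
  have "card K > 0" using False fin KI by (simp add: card_gt_0_iff finite_subset)
  have "2 * L * (2 * real (card K)) \<le> 2 * L\<^sup>2 * (2 * real n)"
    using L card by (intro mult_mono) (auto simp: power2_eq_square)
  then have "2 * L \<le> t\<^sup>2 / (2 * card K)"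
    using \<open>card K > 0\<close> by (simp add: t_def power_mult_distrib field_simps)
  have "measure_pmf.prob (Pi_pmf I 0 (\<lambda>_. rademacher_pmf)) {x. \<bar>\<Sum>k\<in>K. x k * x (\<sigma> k)\<bar> > t}
     \<le> measure_pmf.prob (Pi_pmf I 0 (\<lambda>_. rademacher_pmf)) {x. t \<le> \<bar>\<Sum>k\<in>K. x k * x (\<sigma> k)\<bar>}"
    by (intro measure_pmf.finite_measure_mono) auto
  also have "\<dots> \<le> 2 * exp (- (t\<^sup>2) / (2 * card K))"
    by (rule shift_products_sum_tail[of I K \<sigma> m t, OF fin KI \<sigma>K inj potential False t])
  also have "\<dots> \<le> 2 * exp (- 2 * L)"
    using \<open>2 * L \<le> t\<^sup>2 / (2 * card K)\<close> by simp
  finally show ?thesis by (simp add: t_def)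
qed

lemma cyclic_shift_products_tail:
  fixes K :: "nat set" and n :: nat and L :: real
  assumes K: "K \<subseteq> {0..<N}" and d: "0 < d" "d < N"
    and card: "card K \<le> n" and L: "L \<ge> 1"
  shows "measure_pmf.prob (Pi_pmf {0..<N} 0 (\<lambda>_. rademacher_pmf))
           {b. \<bar>\<Sum>k\<in>K. b k * b ((k + d) mod N)\<bar> > 4 * L * sqrt n} \<le> 4 * exp (- 2 * L)"
proof -
  let ?P = "Pi_pmf {0..<N} 0 (\<lambda>_. rademacher_pmf)"
  define K1 where "K1 = {k\<in>K. k + d < N}"
  define K2 where "K2 = {k\<in>K. N \<le> k + d}"
  have finK: "finite K" using K finite_subset by blast
  have split: "(\<Sum>k\<in>K. b k * b ((k + d) mod N))
      = (\<Sum>k\<in>K1. b k * b (k + d)) + (\<Sum>k\<in>K2. b k * b (k + d - N))" for b :: "nat \<Rightarrow> real"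
  proof -
    have "K = K1 \<union> K2" "K1 \<inter> K2 = {}" by (auto simp: K1_def K2_def)
    then have "(\<Sum>k\<in>K. b k * b ((k + d) mod N))
        = (\<Sum>k\<in>K1. b k * b ((k + d) mod N)) + (\<Sum>k\<in>K2. b k * b ((k + d) mod N))"
      using finK by (simp add: sum.union_disjoint)
    moreover have "(k + d) mod N = k + d - N" if "k \<in> K2" for k
      using that K d by (auto simp: K2_def le_mod_geq)
    ultimately show ?thesis
      by (simp add: K1_def)
  qed
  have "measure_pmf.prob ?P {b. \<bar>\<Sum>k\<in>K1. b k * b (k + d)\<bar> > 2 * L * sqrt n}
      \<le> 2 * exp (- 2 * L)"
    using K d card_mono[OF finK, of K1] card L
    by (intro shift_products_sum_tail_sqrt[where m = "\<lambda>k. k"]) (auto simp: K1_def inj_on_def)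
  moreover have "measure_pmf.prob ?P {b. \<bar>\<Sum>k\<in>K2. b k * b (k + d - N)\<bar> > 2 * L * sqrt n}
      \<le> 2 * exp (- 2 * L)"
    using K d card_mono[OF finK, of K2] card L
    by (intro shift_products_sum_tail_sqrt[where m = "\<lambda>k. N - k"]) (auto simp: K2_def inj_on_def)
  moreover have "{b. \<bar>\<Sum>k\<in>K. b k * b ((k + d) mod N)\<bar> > 4 * L * sqrt n}
      \<subseteq> {b. \<bar>\<Sum>k\<in>K1. b k * b (k + d)\<bar> > 2 * L * sqrt n}
        \<union> {b. \<bar>\<Sum>k\<in>K2. b k * b (k + d - N)\<bar> > 2 * L * sqrt n}"
    unfolding split by auto
  then have "measure_pmf.prob ?P {b. \<bar>\<Sum>k\<in>K. b k * b ((k + d) mod N)\<bar> > 4 * L * sqrt n}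
      \<le> measure_pmf.prob ?P {b. \<bar>\<Sum>k\<in>K1. b k * b (k + d)\<bar> > 2 * L * sqrt n}
        + measure_pmf.prob ?P {b. \<bar>\<Sum>k\<in>K2. b k * b (k + d - N)\<bar> > 2 * L * sqrt n}"
    by (intro order_trans[OF measure_pmf.finite_measure_mono measure_Un_le]) auto
  ultimately show ?thesis by linarith
qed

lemma eq_if_diff_mod_eq_0:
  assumes "i \<in> {1..N}" "j \<in> {1..N}" "(int i - int j) mod int N = 0"
  shows "i = j"
proof (rule ccontr)
  assume "i \<noteq> j"
  then have "\<bar>int N\<bar> \<le> \<bar>int i - int j\<bar>"
    using assms(3) by (intro dvd_imp_le_int) auto
  then show False using assms(1,2) by auto
qed

lemma circulant_inner_product_tail:
  fixes N n r l :: nat and L :: real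
  assumes \<Omega>: "\<Omega> \<subseteq> {1..N}" and card: "card \<Omega> = n" and L: "L \<ge> 1"
    and r: "r \<in> {1..N}" and l: "l \<in> {1..N}" and "r \<noteq> l"
  shows "measure_pmf.prob (Pi_pmf {0..<N} 0 (\<lambda>_. rademacher_pmf))
     {b. \<bar>\<Sum>i\<in>\<Omega>. circulant N b i r * circulant N b i l\<bar> > 4 * L * sqrt n} \<le> 4 * exp (- 2 * L)"
proof -
  define a where "a i = nat ((int r - int i) mod int N)" for i
  define d where "d = nat ((int l - int r) mod int N)"
  have N: "N > 0" using r by auto
  have "d < N" using N by (simp add: d_def nat_less_iff)
  have "int d = (int l - int r) mod int N" using N by (simp add: d_def)
  then have "d \<noteq> 0"
    using eq_if_diff_mod_eq_0[OF l r] \<open>r \<noteq> l\<close> by (metis of_nat_0)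
  have circulant_l: "circulant N b i l = b ((a i + d) mod N)" for b i
  proof -
    have "int ((a i + d) mod N) = ((int r - int i) mod int N + (int l - int r) mod int N) mod int N"
      using N by (simp add: a_def d_def zmod_int)
    also have "\<dots> = (int l - int i) mod int N" by (simp add: mod_add_eq)
    finally have "nat ((int l - int i) mod int N) = (a i + d) mod N" by (metis nat_int)
    then show ?thesis by (simp add: circulant_def)
  qed
  have "inj_on a \<Omega>"
  proof
    fix i j assume "i \<in> \<Omega>" "j \<in> \<Omega>" "a i = a j"
    then have "(int r - int i) mod int N = (int r - int j) mod int N"
      using N by (simp add: a_def nat_eq_iff2)
    then have "(int j - int i) mod int N = 0" by (simp add: mod_eq_dvd_iff)
    then show "i = j" using eq_if_diff_mod_eq_0 \<open>i \<in> \<Omega>\<close> \<open>j \<in> \<Omega>\<close> \<Omega> by (metis subsetD)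
  qed
  have "(\<Sum>i\<in>\<Omega>. circulant N b i r * circulant N b i l)
      = (\<Sum>k\<in>a ` \<Omega>. b k * b ((k + d) mod N))" for b
    by (simp add: sum.reindex[OF \<open>inj_on a \<Omega>\<close>] circulant_l) (simp add: circulant_def a_def)
  moreover have "a ` \<Omega> \<subseteq> {0..<N}" using N by (auto simp: a_def nat_less_iff)
  moreover have "card (a ` \<Omega>) \<le> n" using card_image[OF \<open>inj_on a \<Omega>\<close>] card by simp
  ultimately show ?thesis
    using cyclic_shift_products_tail[of "a ` \<Omega>" N d n L] \<open>d \<noteq> 0\<close> \<open>d < N\<close> L by simp
qed

lemma toeplitz_inner_product_tail:
  fixes N n r l :: nat and L :: real
  assumes \<Omega>: "\<Omega> \<subseteq> {1..N}" and card: "card \<Omega> = n" and L: "L \<ge> 1"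
    and r: "r \<in> {1..N}" and l: "l \<in> {1..N}" and "r \<noteq> l"
  shows "measure_pmf.prob (Pi_pmf {-(int N - 1)..int N - 1} 0 (\<lambda>_. rademacher_pmf))
     {c. \<bar>\<Sum>i\<in>\<Omega>. toeplitz c i r * toeplitz c i l\<bar> > 4 * L * sqrt n} \<le> 4 * exp (- 2 * L)"
proof -
  let ?P = "Pi_pmf {-(int N - 1)..int N - 1} 0 (\<lambda>_. rademacher_pmf)"
  define a where "a i = int r - int i" for i
  define \<sigma> where "\<sigma> k = k + (int l - int r)" for k
  define m where "m k = (if r < l then nat (k + int N) else nat (int N - k))" for k
  have "inj_on a \<Omega>" by (auto simp: a_def inj_on_def)
  have "(\<Sum>i\<in>\<Omega>. toeplitz c i r * toeplitz c i l) = (\<Sum>k\<in>a ` \<Omega>. c k * c (\<sigma> k))" for c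
    unfolding sum.reindex[OF \<open>inj_on a \<Omega>\<close>] by (simp add: toeplitz_def a_def \<sigma>_def)
  then have "{c. \<bar>\<Sum>i\<in>\<Omega>. toeplitz c i r * toeplitz c i l\<bar> > 4 * L * sqrt n}
      \<subseteq> {c. \<bar>\<Sum>k\<in>a ` \<Omega>. c k * c (\<sigma> k)\<bar> > 2 * L * sqrt n}"
    using L by (auto intro: order.strict_trans1[rotated])
  then have "measure_pmf.prob ?P {c. \<bar>\<Sum>i\<in>\<Omega>. toeplitz c i r * toeplitz c i l\<bar> > 4 * L * sqrt n}
      \<le> measure_pmf.prob ?P {c. \<bar>\<Sum>k\<in>a ` \<Omega>. c k * c (\<sigma> k)\<bar> > 2 * L * sqrt n}"
    by (intro measure_pmf.finite_measure_mono) auto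
  also have "\<dots> \<le> 2 * exp (- 2 * L)"
    using \<Omega> r l \<open>r \<noteq> l\<close> card_image[OF \<open>inj_on a \<Omega>\<close>] card L
    by (intro shift_products_sum_tail_sqrt[where m = m])
       (auto simp: a_def \<sigma>_def m_def inj_on_def)
  also have "\<dots> \<le> 4 * exp (- 2 * L)" by simp
  finally show ?thesis .
qed

lemma coherence_le:
  assumes "B \<ge> 0"
    and "\<And>r l. r \<in> {1..N} \<Longrightarrow> l \<in> {1..N} \<Longrightarrow> r \<noteq> l \<Longrightarrow> \<bar>\<Sum>i\<in>R. A i r * A i l\<bar> \<le> B"
  shows "coherence R N A \<le> B"
proof -
  have "{\<bar>\<Sum>i\<in>R. A i r * A i l\<bar> | r l. r \<in> {1..N} \<and> l \<in> {1..N} \<and> r \<noteq> l}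
      \<subseteq> (\<lambda>(r, l). \<bar>\<Sum>i\<in>R. A i r * A i l\<bar>) ` ({1..N} \<times> {1..N})"
    by auto
  then have "finite {\<bar>\<Sum>i\<in>R. A i r * A i l\<bar> | r l. r \<in> {1..N} \<and> l \<in> {1..N} \<and> r \<noteq> l}"
    by (rule finite_subset) auto
  then show ?thesis
    unfolding coherence_def using assms by (subst Max_le_iff) auto
qed

lemma prob_coherence_le:
  fixes P :: "'b pmf" and A :: "'b \<Rightarrow> nat \<Rightarrow> nat \<Rightarrow> real" and n :: nat
  assumes B: "B \<ge> 0" and \<delta>: "\<delta> \<ge> 0"
    and pair_tail: "\<And>r l. r \<in> {1..N} \<Longrightarrow> l \<in> {1..N} \<Longrightarrow> r \<noteq> l \<Longrightarrow>
      measure_pmf.prob P {x. \<bar>\<Sum>i\<in>\<Omega>. A x i r * A x i l\<bar> > B * sqrt n} \<le> \<delta>"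
  shows "measure_pmf.prob P {x. coherence \<Omega> N (\<lambda>i j. A x i j / sqrt n) \<le> B / sqrt n}
           \<ge> 1 - real N ^ 2 * \<delta>"
proof -
  define Pairs where "Pairs = {(r, l). r \<in> {1..N} \<and> l \<in> {1..N} \<and> r \<noteq> l}"
  define Bad where "Bad p = {x. \<bar>\<Sum>i\<in>\<Omega>. A x i (fst p) * A x i (snd p)\<bar> > B * sqrt n}" for p
  let ?G = "{x. coherence \<Omega> N (\<lambda>i j. A x i j / sqrt n) \<le> B / sqrt n}"
  have "Pairs \<subseteq> {1..N} \<times> {1..N}" by (auto simp: Pairs_def)
  then have "finite Pairs" and "card Pairs \<le> N ^ 2"
    using card_mono[of "{1..N} \<times> {1..N}" Pairs] by (auto simp: power2_eq_square finite_subset)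
  have "UNIV - ?G \<subseteq> (\<Union>p\<in>Pairs. Bad p)"
  proof
    fix x assume "x \<in> UNIV - ?G"
    moreover have "x \<in> ?G" if good: "\<forall>p\<in>Pairs. x \<notin> Bad p"
    proof (simp, rule coherence_le)
      show "0 \<le> B / sqrt n" using B by simp
      fix r l assume "r \<in> {1..N}" "l \<in> {1..N}" "r \<noteq> l"
      then have "\<bar>\<Sum>i\<in>\<Omega>. A x i r * A x i l\<bar> \<le> B * sqrt n"
        using good by (force simp: Pairs_def Bad_def)
      then have "\<bar>\<Sum>i\<in>\<Omega>. A x i r * A x i l\<bar> / n \<le> B * sqrt n / n"
        by (intro divide_right_mono) auto
      also have "\<dots> = B / sqrt n"
        by (metis real_div_sqrt of_nat_0_le_iff times_divide_eq_right divide_divide_eq_right)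
      finally show "\<bar>\<Sum>i\<in>\<Omega>. A x i r / sqrt n * (A x i l / sqrt n)\<bar> \<le> B / sqrt n"
        by (simp add: sum_divide_distrib[symmetric])
    qed
    ultimately show "x \<in> (\<Union>p\<in>Pairs. Bad p)" by blast
  qed
  then have "measure_pmf.prob P (UNIV - ?G) \<le> measure_pmf.prob P (\<Union>p\<in>Pairs. Bad p)"
    by (intro measure_pmf.finite_measure_mono) auto
  also have "\<dots> \<le> (\<Sum>p\<in>Pairs. measure_pmf.prob P (Bad p))"
    by (rule measure_pmf.finite_measure_subadditive_finite[OF \<open>finite Pairs\<close>]) auto
  also have "\<dots> \<le> (\<Sum>p\<in>Pairs. \<delta>)"
    by (intro sum_mono) (auto simp: Pairs_def Bad_def intro: pair_tail)
  also have "\<dots> \<le> real N ^ 2 * \<delta>"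
    using \<open>card Pairs \<le> N ^ 2\<close> \<delta> by (simp add: mult_right_mono flip: of_nat_power)
  finally show ?thesis
    using measure_pmf.prob_compl[of ?G P] by simp
qed

lemma sq_mult_exp_neg_two_ln_le:
  fixes \<epsilon> :: real
  assumes "N \<ge> 1" "0 < \<epsilon>" "\<epsilon> < 1"
  shows "real N ^ 2 * (4 * exp (- 2 * ln (2 * real N ^ 2 / \<epsilon>))) \<le> \<epsilon>"
proof -
  have "- 2 * ln (2 * real N ^ 2 / \<epsilon>) = ln ((\<epsilon> / (2 * real N ^ 2))\<^sup>2)"
    using assms by (simp add: ln_realpow ln_div)
  then have "exp (- 2 * ln (2 * real N ^ 2 / \<epsilon>)) = (\<epsilon> / (2 * real N ^ 2))\<^sup>2"
    using assms by simp
  then have "real N ^ 2 * (4 * exp (- 2 * ln (2 * real N ^ 2 / \<epsilon>))) = \<epsilon>\<^sup>2 / real N ^ 2"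
    using assms by (simp add: field_simps power2_eq_square)
  also have "\<dots> \<le> \<epsilon>\<^sup>2" using assms by (simp add: field_simps)
  also have "\<dots> \<le> \<epsilon>" using assms by (simp add: power2_eq_square)
  finally show ?thesis .
qed

lemma one_le_ln_two_sq_div:
  fixes \<epsilon> :: real
  assumes "N \<ge> 2" "0 < \<epsilon>" "\<epsilon> < 1"
  shows "1 \<le> ln (2 * real N ^ 2 / \<epsilon>)"
proof -
  have "\<epsilon> * exp 1 \<le> 1 * exp 1"
    using assms(3) by (intro mult_right_mono) auto
  then have "\<epsilon> * exp 1 \<le> 3" using exp_le by linarith
  moreover have "(2::real) ^ 2 \<le> real N ^ 2" using assms(1) by (intro power_mono) auto
  ultimately have "exp 1 \<le> 2 * real N ^ 2 / \<epsilon>"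
    using assms(2) by (simp add: field_simps)
  then show ?thesis by (metis exp_gt_zero ln_ge_iff order_less_le_trans)
qed

theorem proposition3:
  fixes N n :: nat and \<Omega> :: "nat set" and \<epsilon> :: real
  assumes "\<Omega> \<subseteq> {1..N}" and "card \<Omega> = n"
    and "0 < \<epsilon>" and "\<epsilon> < 1"
  shows "measure_pmf.prob (Pi_pmf {0..<N} 0 (\<lambda>_. rademacher_pmf))
           {b. coherence \<Omega> N (\<lambda>i j. circulant N b i j / sqrt n)
                 \<le> 4 * ln (2 * real N ^ 2 / \<epsilon>) / sqrt n} \<ge> 1 - \<epsilon> \<and>
         measure_pmf.prob (Pi_pmf {-(int N - 1)..int N - 1} 0 (\<lambda>_. rademacher_pmf))
           {c. coherence \<Omega> N (\<lambda>i j. toeplitz c i j / sqrt n)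
                 \<le> 4 * ln (2 * real N ^ 2 / \<epsilon>) / sqrt n} \<ge> 1 - \<epsilon>"
proof (cases "n = 0")
  case True
  have "finite \<Omega>" using assms(1) finite_subset by blast
  then have "\<Omega> = {}" using True assms(2) by simp
  then have "coherence \<Omega> N A \<le> 0" for A by (intro coherence_le) auto
  then show ?thesis using True assms(3) by simp
next
  case False
  define L where "L = ln (2 * real N ^ 2 / \<epsilon>)"
  obtain i where "i \<in> \<Omega>" using False assms(2) by fastforce
  then have "N \<ge> 1" using assms(1) by auto
  then have "1 \<le> real N ^ 2" by simp
  then have "1 \<le> 2 * real N ^ 2 / \<epsilon>" using assms(3,4) by (simp add: field_simps)
  then have "L \<ge> 0" unfolding L_def by (rule ln_ge_zero)
  have L: "L \<ge> 1" if "r \<in> {1..N}" "l \<in> {1..N}" "r \<noteq> l" for r l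
    unfolding L_def using that assms(3,4) by (intro one_le_ln_two_sq_div) auto
  have "measure_pmf.prob (Pi_pmf {0..<N} 0 (\<lambda>_. rademacher_pmf))
      {b. coherence \<Omega> N (\<lambda>i j. circulant N b i j / sqrt n) \<le> 4 * L / sqrt n}
      \<ge> 1 - real N ^ 2 * (4 * exp (- 2 * L))"
    using \<open>L \<ge> 0\<close> circulant_inner_product_tail[OF assms(1,2)] L
    by (intro prob_coherence_le[where A = "circulant N"]) simp_all
  moreover have "measure_pmf.prob (Pi_pmf {-(int N - 1)..int N - 1} 0 (\<lambda>_. rademacher_pmf))
      {c. coherence \<Omega> N (\<lambda>i j. toeplitz c i j / sqrt n) \<le> 4 * L / sqrt n}
      \<ge> 1 - real N ^ 2 * (4 * exp (- 2 * L))"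
    using \<open>L \<ge> 0\<close> toeplitz_inner_product_tail[OF assms(1,2)] L
    by (intro prob_coherence_le[where A = toeplitz]) simp_all
  moreover have "real N ^ 2 * (4 * exp (- 2 * L)) \<le> \<epsilon>"
    unfolding L_def using \<open>N \<ge> 1\<close> assms(3,4) by (rule sq_mult_exp_neg_two_ln_le)
  ultimately show ?thesis unfolding L_def by linarith
qed

end
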